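(* For every reverse semistandard Young tableau $V$, the right row-filling algorithm $\psi(V)$ is a well-defined element of $\mathrm{qKT}^{(1)}$, and $\psi:\mathrm{revSSYT}\to\mathrm{qKT}^{(1)}$ is a bijection with inverse $\phi$. Both maps preserve column sets.
   Context: $\mathrm{revSSYT}$ is the set of reverse semistandard Young tableaux of all partition shapes (English notation; positive integer entries; rows weakly decreasing left to right, columns strictly decreasing top to bottom). The $c$th column set of a tableau or filling is the set of entries in its $c$th column. For a weak composition $a$, $D(a)$ has $a_i$ left-justified boxes in row $i$, row 1 lowest. A quasi-key tableau of shape $a$ is a filling of $D(a)$ with positive integers such that (1) entries weakly decrease along rows and no entry of row $i$ exceeds $i$; (2) entries in each column are distinct and increase going up the first column; (3) if an entry $i$ is above an entry $k$ in the same column with $i<k$, there is an entry $j$ immediately right of $k$ with $i<j$; (4) for two rows with the higher row strictly longer, if $i$ is in column $c$ of the lower row and $j$ in column $c+1$ of the higher row, then $i<j$. $\mathrm{qKT}^{(1)}$ is the set of all quasi-key tableaux (of all shapes $a$) whose first-column entries equal their row indices. $\phi(T)$ for $T\in\mathrm{qKT}^{(1)}$: the top-justified tableau whose $c$th column consists of the entries of column $c$ of $T$ sorted decreasingly from top to bottom. Right row-filling $\psi(V)$: let $C_1,C_2,\ldots$ be the column sets of $V$. Repeat until all are empty: let $k$ be the largest index with $C_k$ nonempty; choose the smallest element $y_k$ of $C_k$; for $c=k-1,\ldots,1$ choose the smallest element $y_c$ of $C_c$ with $y_c\ge y_{c+1}$; make $(y_1,\ldots,y_k)$ (left to right) the row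 of index $y_1$ of the output filling; delete $y_1,\ldots,y_k$ from their column sets. The output is a filling of a skyline diagram. *)

theory Defs
  imports Main
begin

text \<open>A tableau is a list of rows, top row first (English notation); row and
column indices are 0-based here (row r of the list is the (r+1)-st row from
the top, entry r!c is in column c+1). Rows are nonempty, so each partition
shape (including the empty one) has a unique representation.\<close>

type_synonym tableau = "nat list list"

definition revSSYT :: "tableau set" where
  "revSSYT = {V.
     (\<forall>row \<in> set V. row \<noteq> []) \<and>
     (\<forall>i j. i \<le> j \<and> j < length V \<longrightarrow> length (V!j) \<le> length (V!i)) \<and>
     (\<forall>row \<in> set V. \<forall>x \<in> set row. 0 < x) \<and>
     (\<forall>row \<in> set V. sorted_wrt (\<ge>) row) \<and>
     (\<forall>i j c. i < j \<and> j < length V \<and> c < length (V!j) \<longrightarrow> V!j!c < V!i!c)}"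

definition tab_width :: "tableau \<Rightarrow> nat" where
  "tab_width V = foldr max (map length V) 0"

definition tab_colset :: "tableau \<Rightarrow> nat \<Rightarrow> nat set" where
  "tab_colset V c = {V!r!c | r. r < length V \<and> c < length (V!r)}"

text \<open>A filling of D(a) for a weak composition a: row i (1-based, row 1 lowest)
is the list F i, read left to right; a_i = length (F i). Row index 0 is unused
and all but finitely many rows are empty (trailing zero parts of a are
immaterial).\<close>

type_synonym filling = "nat \<Rightarrow> nat list"

definition is_filling :: "filling \<Rightarrow> bool" where
  "is_filling F \<longleftrightarrow> F 0 = [] \<and> finite {i. F i \<noteq> []}"

definition qKT :: "filling set" where
  "qKT = {F. is_filling F \<and>
     (\<forall>i. \<forall>x \<in> set (F i). 0 < x) \<and>
     \<comment> \<open>(1)\<close>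
     (\<forall>i. sorted_wrt (\<ge>) (F i) \<and> (\<forall>x \<in> set (F i). x \<le> i)) \<and>
     \<comment> \<open>(2) distinct entries in columns; first column increases going up\<close>
     (\<forall>r s c. r \<noteq> s \<and> c < length (F r) \<and> c < length (F s) \<longrightarrow> F r ! c \<noteq> F s ! c) \<and>
     (\<forall>r s. s < r \<and> F r \<noteq> [] \<and> F s \<noteq> [] \<longrightarrow> F s ! 0 < F r ! 0) \<and>
     \<comment> \<open>(3) entry i = F r ! c above entry k = F s ! c (s < r), i < k\<close>
     (\<forall>r s c. s < r \<and> c < length (F r) \<and> c < length (F s) \<and> F r ! c < F s ! c \<longrightarrow>
        Suc c < length (F s) \<and> F r ! c < F s ! Suc c) \<and>
     \<comment> \<open>(4) higher row r strictly longer than lower row s\<close>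
     (\<forall>r s c. s < r \<and> length (F s) < length (F r) \<and> c < length (F s) \<and> Suc c < length (F r)
        \<longrightarrow> F s ! c < F r ! Suc c)}"

definition qKT1 :: "filling set" where
  "qKT1 = {F \<in> qKT. \<forall>i. F i \<noteq> [] \<longrightarrow> F i ! 0 = i}"

definition fil_colset :: "filling \<Rightarrow> nat \<Rightarrow> nat set" where
  "fil_colset F c = {F i ! c | i. c < length (F i)}"

definition fil_height :: "filling \<Rightarrow> nat" where
  "fil_height F = (LEAST N. \<forall>i \<ge> N. F i = [])"

definition fil_width :: "filling \<Rightarrow> nat" where
  "fil_width F = foldr max (map (\<lambda>i. length (F i)) [0..<fil_height F]) 0"

definition fil_col :: "filling \<Rightarrow> nat \<Rightarrow> nat list" where
  "fil_col F c = map (\<lambda>i. F i ! c) (filter (\<lambda>i. c < length (F i)) [0..<fil_height F])"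

definition phi_col :: "filling \<Rightarrow> nat \<Rightarrow> nat list" where
  "phi_col F c = rev (sort (fil_col F c))"

text \<open>phi: top-justified tableau whose column c is phi_col F c (top to bottom).\<close>
definition phi :: "filling \<Rightarrow> tableau" where
  "phi F = (let W = fil_width F;
               H = foldr max (map (\<lambda>c. length (phi_col F c)) [0..<W]) 0 in
           map (\<lambda>r. map (\<lambda>c. phi_col F c ! r) (filter (\<lambda>c. r < length (phi_col F c)) [0..<W]))
               [0..<H])"

text \<open>Given column sets C_1..C_(k-1) (as a list) and y_k = b, choose
y_(k-1),...,y_1 right to left: y_c is the smallest element of C_c with
y_c \<ge> y_(c+1). Returns None if some choice is impossible.\<close>
fun chain :: "nat set list \<Rightarrow> nat \<Rightarrow> nat list option" where
  "chain [] b = Some []"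
| "chain (C # Cs) b =
     (case chain Cs b of
        None \<Rightarrow> None
      | Some ys \<Rightarrow>
          (let b' = (case ys of [] \<Rightarrow> b | y # _ \<Rightarrow> y) in
           if {y \<in> C. b' \<le> y} = {} then None
           else Some ((LEAST y. y \<in> C \<and> b' \<le> y) # ys)))"

definition all_empty :: "nat set list \<Rightarrow> bool" where
  "all_empty cs \<longleftrightarrow> (\<forall>C \<in> set cs. C = {})"

definition psi_step :: "nat set list \<Rightarrow> (nat list \<times> nat set list) option" where
  "psi_step cs =
     (let k = Max {i. i < length cs \<and> cs!i \<noteq> {}};
          yk = (LEAST y. y \<in> cs!k) in
      case chain (take k cs) yk of
        None \<Rightarrow> None
      | Some ys \<Rightarrow>
          (let row = ys @ [yk] in
           Some (row, map (\<lambda>i. if i < length row then cs!i - {row!i} else cs!i) [0..<length cs])))"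

fun psi_aux :: "nat \<Rightarrow> nat set list \<Rightarrow> filling option" where
  "psi_aux 0 cs = (if all_empty cs then Some (\<lambda>_. []) else None)"
| "psi_aux (Suc n) cs =
     (if all_empty cs then Some (\<lambda>_. [])
      else case psi_step cs of
             None \<Rightarrow> None
           | Some (row, cs') \<Rightarrow>
               (case psi_aux n cs' of
                  None \<Rightarrow> None
                | Some F \<Rightarrow> Some (F(hd row := row))))"

definition tab_colsets :: "tableau \<Rightarrow> nat set list" where
  "tab_colsets V = map (tab_colset V) [0..<tab_width V]"

text \<open>psi V = None means the algorithm is not well defined on V (some choice
is impossible). The fuel (number of entries) suffices since each step deletes
at least one entry.\<close>
definition psi :: "tableau \<Rightarrow> filling option" where
  "psi V = psi_aux (sum_list (map length V)) (tab_colsets V)"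

end

theory Submission
  imports Defs
begin

text \<open>The column sets of a reverse semistandard tableau are dominated: for every
threshold t, column c+1 has at most as many entries \<open>\<ge> t\<close> as column c. Under this
condition the greedy choices of the right row-filling never get stuck, the sets
left after removing the chosen row are again dominated, and the chosen row can be
put on top of the filling built recursively from them without violating the
quasi-key conditions; so psi lands in qKT1 and keeps the column sets.
Conversely, in a filling in qKT1 the row through the least entry of the last
nonempty column is precisely the greedy row, so psi recovers every such filling
from its column sets. Finally phi sorts the columns, which yields a reverse
semistandard tableau with the same column sets, and such a tableau is determined
by its column sets; hence phi and psi are mutually inverse.\<close>

section \<open>Greedy choices of the right row-filling\<close>

definition greedy_chain :: "nat set list \<Rightarrow> nat list \<Rightarrow> bool" where
  "greedy_chain Cs row \<longleftrightarrow> length row = Suc (length Cs) \<and>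
     (\<forall>c<length Cs. row!c \<in> Cs!c \<and> row!Suc c \<le> row!c \<and>
        (\<forall>y\<in>Cs!c. row!Suc c \<le> y \<longrightarrow> row!c \<le> y))"

lemma greedy_chain_Nil: "greedy_chain [] row \<longleftrightarrow> length row = 1"
  by (simp add: greedy_chain_def)

lemma greedy_chain_Cons:
  "greedy_chain (C # Cs) (z # row) \<longleftrightarrow>
     greedy_chain Cs row \<and> z \<in> C \<and> row!0 \<le> z \<and> (\<forall>y\<in>C. row!0 \<le> y \<longrightarrow> z \<le> y)"
  unfolding greedy_chain_def by (auto simp: All_less_Suc2)

lemma chain_eq_SomeI: "greedy_chain Cs (zs @ [b]) \<Longrightarrow> chain Cs b = Some zs"
proof (induction Cs arbitrary: zs)
  case Nil
  then show ?case by (simp add: greedy_chain_Nil)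
next
  case (Cons C Cs)
  then obtain z zs' where zs: "zs = z # zs'"
    by (cases zs) (auto simp: greedy_chain_def)
  let ?b' = "(zs' @ [b]) ! 0"
  have g: "greedy_chain Cs (zs' @ [b])" "z \<in> C" "?b' \<le> z" "\<forall>y\<in>C. ?b' \<le> y \<longrightarrow> z \<le> y"
    using Cons.prems unfolding zs by (simp_all add: greedy_chain_Cons)
  have "(case zs' of [] \<Rightarrow> b | y # _ \<Rightarrow> y) = ?b'"
    by (cases zs') auto
  moreover have "(LEAST y. y \<in> C \<and> ?b' \<le> y) = z"
    using g by (intro Least_equality) auto
  ultimately show ?case
    using Cons.IH[OF g(1)] g(2,3) unfolding zs by (auto simp: Let_def)
qed

text \<open>The choice can only get stuck if some element of a column set has nothing
weakly above it in the column set to its left.\<close>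
lemma greedy_chain_exists:
  assumes "\<forall>c<length Cs. \<forall>z\<in>(Cs @ [{b}])!Suc c. \<exists>y\<in>Cs!c. z \<le> y"
  shows "\<exists>zs. greedy_chain Cs (zs @ [b])"
  using assms
proof (induction Cs)
  case Nil
  then show ?case by (simp add: greedy_chain_Nil)
next
  case (Cons C Cs)
  then obtain zs where zs: "greedy_chain Cs (zs @ [b])"
    by (metis (no_types, lifting) Suc_less_eq append_Cons length_Cons nth_Cons_Suc)
  let ?b' = "(zs @ [b]) ! 0"
  have "?b' \<in> (Cs @ [{b}]) ! 0"
    using zs by (cases Cs) (auto simp: greedy_chain_def nth_append)
  then obtain y where "y \<in> C" "?b' \<le> y"
    using Cons.prems by fastforce
  then have "greedy_chain (C # Cs) ((LEAST y. y \<in> C \<and> ?b' \<le> y) # zs @ [b])"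
    using zs unfolding greedy_chain_Cons
    by (metis (no_types, lifting) LeastI Least_le)
  then show ?case
    by (metis append_Cons)
qed

text \<open>The row (y_1,...,y_(k+1)) built by one step of the right row-filling, with
columns 0-based.\<close>
definition greedy_row :: "nat set list \<Rightarrow> nat \<Rightarrow> nat list \<Rightarrow> bool" where
  "greedy_row cs k row \<longleftrightarrow> k < length cs \<and> greedy_chain (take k cs) row \<and>
     row!k \<in> cs!k \<and> (\<forall>y\<in>cs!k. row!k \<le> y)"

lemma greedy_rowI:
  assumes "length row = Suc k" "k < length cs" "\<And>c. c \<le> k \<Longrightarrow> row!c \<in> cs!c"
    "\<And>y. y \<in> cs!k \<Longrightarrow> row!k \<le> y" "\<And>c. c < k \<Longrightarrow> row!Suc c \<le> row!c"
    "\<And>c y. c < k \<Longrightarrow> y \<in> cs!c \<Longrightarrow> row!Suc c \<le> y \<Longrightarrow> row!c \<le> y"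
  shows "greedy_row cs k row"
  using assms by (auto simp: greedy_row_def greedy_chain_def min_def)

context
  fixes cs k row
  assumes greedy: "greedy_row cs k row"
begin

lemma greedy_row_length: "length row = Suc k"
  using greedy by (auto simp: greedy_row_def greedy_chain_def min_def)

lemma greedy_row_mem: "c \<le> k \<Longrightarrow> row!c \<in> cs!c"
  using greedy by (cases "c = k") (auto simp: greedy_row_def greedy_chain_def min_def)

lemma greedy_row_last_le: "y \<in> cs!k \<Longrightarrow> row!k \<le> y"
  using greedy by (simp add: greedy_row_def)

lemma greedy_row_Suc_le: "c < k \<Longrightarrow> row!Suc c \<le> row!c"
  using greedy by (auto simp: greedy_row_def greedy_chain_def min_def)

lemma greedy_row_least: "c < k \<Longrightarrow> y \<in> cs!c \<Longrightarrow> row!Suc c \<le> y \<Longrightarrow> row!c \<le> y"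
  using greedy by (auto simp: greedy_row_def greedy_chain_def min_def)

lemma greedy_row_less_Suc: "c < k \<Longrightarrow> y \<in> cs!c \<Longrightarrow> y < row!c \<Longrightarrow> y < row!Suc c"
  using greedy_row_least by fastforce

lemma greedy_row_antimono: "i \<le> j \<Longrightarrow> j \<le> k \<Longrightarrow> row!j \<le> row!i"
proof (induction j)
  case (Suc j)
  then show ?case
    using greedy_row_Suc_le[of j] by (cases "i = Suc j") auto
qed simp

lemma greedy_row_sorted: "sorted_wrt (\<ge>) row"
  unfolding sorted_wrt_iff_nth_less using greedy_row_antimono greedy_row_length by simp

end

definition delete_row :: "nat set list \<Rightarrow> nat list \<Rightarrow> nat set list" where
  "delete_row cs row = map (\<lambda>i. if i < length row then cs!i - {row!i} else cs!i) [0..<length cs]"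

lemma length_delete_row [simp]: "length (delete_row cs row) = length cs"
  and nth_delete_row [simp]:
    "i < length cs \<Longrightarrow> delete_row cs row ! i = (if i < length row then cs!i - {row!i} else cs!i)"
  unfolding delete_row_def by simp_all

lemma psi_step_greedy_row:
  assumes "k = Max {i. i < length cs \<and> cs!i \<noteq> {}}" and "greedy_row cs k row"
  shows "psi_step cs = Some (row, delete_row cs row)"
proof -
  have row: "take k row @ [row!k] = row"
    using greedy_row_length[OF assms(2)] by (metis lessI take_Suc_conv_app_nth take_all order_refl)
  have "(LEAST y. y \<in> cs!k) = row!k"
    using assms(2) by (intro Least_equality) (auto simp: greedy_row_mem greedy_row_last_le)
  moreover have "chain (take k cs) (row!k) = Some (take k row)"
    using assms(2) row by (intro chain_eq_SomeI) (simp add: greedy_row_def)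
  ultimately show ?thesis
    unfolding psi_step_def delete_row_def Let_def using assms(1) row by simp
qed

lemma greedy_row_exists:
  assumes "k < length cs" "cs!k \<noteq> {}" "\<forall>c<k. \<forall>z\<in>cs!Suc c. \<exists>y\<in>cs!c. z \<le> y"
  shows "\<exists>row. greedy_row cs k row"
proof -
  define b where "b = (LEAST y. y \<in> cs!k)"
  have b: "b \<in> cs!k" "\<forall>y\<in>cs!k. b \<le> y"
    using assms(2) unfolding b_def by (auto intro: LeastI Least_le)
  have "\<forall>c<length (take k cs). \<forall>z\<in>(take k cs @ [{b}])!Suc c. \<exists>y\<in>take k cs!c. z \<le> y"
  proof (intro allI impI ballI)
    fix c z assume c: "c < length (take k cs)" and z: "z \<in> (take k cs @ [{b}])!Suc c"
    then have "z \<in> cs!Suc c"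
      using b(1) assms(1) by (cases "Suc c = k") (auto simp: nth_append)
    then show "\<exists>y\<in>take k cs!c. z \<le> y"
      using assms(3) c by auto
  qed
  then obtain zs where "greedy_chain (take k cs) (zs @ [b])"
    using greedy_chain_exists by blast
  moreover have "(zs @ [b]) ! k = b"
    using calculation assms(1) by (auto simp: greedy_chain_def nth_append)
  ultimately have "greedy_row cs k (zs @ [b])"
    using assms(1) b by (simp add: greedy_row_def)
  then show ?thesis ..
qed

lemma qKT1_iff: "T \<in> qKT1 \<longleftrightarrow> T 0 = [] \<and> finite {i. T i \<noteq> []} \<and>
     (\<forall>i. \<forall>x \<in> set (T i). 0 < x) \<and>
     (\<forall>i. sorted_wrt (\<ge>) (T i) \<and> (\<forall>x \<in> set (T i). x \<le> i)) \<and>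
     (\<forall>r s c. r \<noteq> s \<and> c < length (T r) \<and> c < length (T s) \<longrightarrow> T r ! c \<noteq> T s ! c) \<and>
     (\<forall>r s. s < r \<and> T r \<noteq> [] \<and> T s \<noteq> [] \<longrightarrow> T s ! 0 < T r ! 0) \<and>
     (\<forall>r s c. s < r \<and> c < length (T r) \<and> c < length (T s) \<and> T r ! c < T s ! c \<longrightarrow>
        Suc c < length (T s) \<and> T r ! c < T s ! Suc c) \<and>
     (\<forall>r s c. s < r \<and> length (T s) < length (T r) \<and> c < length (T s) \<and> Suc c < length (T r)
        \<longrightarrow> T s ! c < T r ! Suc c) \<and>
     (\<forall>i. T i \<noteq> [] \<longrightarrow> T i ! 0 = i)"
  unfolding qKT1_def qKT_def is_filling_def by simp

context
  fixes T assumes T: "T \<in> qKT1"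
begin

lemma qKT1_zero: "T 0 = []"
  using T unfolding qKT1_iff by (elim conjE) metis

lemma qKT1_finite: "finite {i. T i \<noteq> []}"
  using T unfolding qKT1_iff by (elim conjE) metis

lemma qKT1_pos: "x \<in> set (T i) \<Longrightarrow> 0 < x"
  using T unfolding qKT1_iff by (elim conjE) metis

lemma qKT1_sorted: "sorted_wrt (\<ge>) (T i)"
  using T unfolding qKT1_iff by (elim conjE) metis

lemma qKT1_le_index: "x \<in> set (T i) \<Longrightarrow> x \<le> i"
  using T unfolding qKT1_iff by (elim conjE) metis

lemma qKT1_column_distinct:
  "r \<noteq> s \<Longrightarrow> c < length (T r) \<Longrightarrow> c < length (T s) \<Longrightarrow> T r ! c \<noteq> T s ! c"
  using T unfolding qKT1_iff by (elim conjE) metis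

lemma qKT1_inversion: "s < r \<Longrightarrow> c < length (T r) \<Longrightarrow> c < length (T s) \<Longrightarrow> T r ! c < T s ! c \<Longrightarrow>
    Suc c < length (T s) \<and> T r ! c < T s ! Suc c"
  using T unfolding qKT1_iff by (elim conjE) metis

lemma qKT1_longer: "s < r \<Longrightarrow> length (T s) < length (T r) \<Longrightarrow> c < length (T s) \<Longrightarrow>
    Suc c < length (T r) \<Longrightarrow> T s ! c < T r ! Suc c"
  using T unfolding qKT1_iff by (elim conjE) metis

lemma qKT1_first: "T i \<noteq> [] \<Longrightarrow> T i ! 0 = i"
  using T unfolding qKT1_iff by (elim conjE) metis

lemma qKT1_Suc_le: "Suc c < length (T i) \<Longrightarrow> T i ! Suc c \<le> T i ! c"
  using qKT1_sorted[of i] by (simp add: sorted_wrt_iff_nth_less)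

end

lemma qKT1I:
  assumes "T 0 = []" "finite {i. T i \<noteq> []}"
    "\<And>i x. x \<in> set (T i) \<Longrightarrow> 0 < x"
    "\<And>i. sorted_wrt (\<ge>) (T i)" "\<And>i x. x \<in> set (T i) \<Longrightarrow> x \<le> i"
    "\<And>r s c. r \<noteq> s \<Longrightarrow> c < length (T r) \<Longrightarrow> c < length (T s) \<Longrightarrow> T r ! c \<noteq> T s ! c"
    "\<And>r s c. s < r \<Longrightarrow> c < length (T r) \<Longrightarrow> c < length (T s) \<Longrightarrow> T r ! c < T s ! c \<Longrightarrow>
        Suc c < length (T s) \<and> T r ! c < T s ! Suc c"
    "\<And>r s c. s < r \<Longrightarrow> length (T s) < length (T r) \<Longrightarrow> c < length (T s) \<Longrightarrow>
        Suc c < length (T r) \<Longrightarrow> T s ! c < T r ! Suc c"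
    "\<And>i. T i \<noteq> [] \<Longrightarrow> T i ! 0 = i"
  shows "T \<in> qKT1"
  unfolding qKT1_iff
proof (intro conjI allI impI ballI)
  fix r s assume "s < r \<and> T r \<noteq> [] \<and> T s \<noteq> []"
  then show "T s ! 0 < T r ! 0" using assms(9) by simp
next
  fix r s c assume "s < r \<and> c < length (T r) \<and> c < length (T s) \<and> T r ! c < T s ! c"
  then show "Suc c < length (T s)" "T r ! c < T s ! Suc c" using assms(7) by blast+
qed (use assms in \<open>simp_all add: Ball_def\<close>)

lemma qKT1_empty: "(\<lambda>_. []) \<in> qKT1"
  by (rule qKT1I) auto

lemma qKT1_fun_upd_Nil:
  assumes "T \<in> qKT1" shows "T(j := []) \<in> qKT1"
proof (rule qKT1I)
  show "finite {i. (T(j := [])) i \<noteq> []}"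
    by (rule finite_subset[OF _ qKT1_finite[OF assms]]) auto
qed (use assms in \<open>auto simp: qKT1_zero qKT1_pos qKT1_sorted qKT1_le_index qKT1_column_distinct
  qKT1_inversion qKT1_longer qKT1_first split: if_splits\<close>)

lemma fil_colset_eq_empty_iff: "fil_colset T c = {} \<longleftrightarrow> (\<forall>i. length (T i) \<le> c)"
  unfolding fil_colset_def by (auto simp: not_less)

lemma fil_colset_fun_upd_Nil_row:
  assumes "T j = []"
  shows "fil_colset (T(j := row)) c = fil_colset T c \<union> (if c < length row then {row!c} else {})"
  using assms unfolding fil_colset_def by (auto split: if_splits) (metis list.size(3) not_less0)+

lemma fil_colset_fun_upd_Nil:
  assumes "T \<in> qKT1"
  shows "fil_colset (T(j := [])) c =
    (if c < length (T j) then fil_colset T c - {T j!c} else fil_colset T c)"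
  using qKT1_column_distinct[OF assms] unfolding fil_colset_def
  by (auto split: if_splits) metis+

context
  fixes T cs k row
  assumes T: "T \<in> qKT1" and greedy: "greedy_row cs k row"
    and T_row: "T (row!0) = []"
    and colsets: "\<forall>c\<le>k. fil_colset T c = cs!c - {row!c}"
    and lengths: "\<forall>i. length (T i) \<le> Suc k"
    and pos: "0 < row!k"
begin

lemma entry_in_colset: "c < length (T s) \<Longrightarrow> c \<le> k \<and> T s!c \<in> cs!c \<and> T s!c \<noteq> row!c"
proof -
  assume c: "c < length (T s)"
  then have "c \<le> k" using lengths[rule_format, of s] by simp
  moreover have "T s!c \<in> fil_colset T c" unfolding fil_colset_def using c by blast
  ultimately show ?thesis using colsets by auto
qed

text \<open>Every row below the new row is entrywise smaller: the first entries compare as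
row indices, and greediness propagates this to the right.\<close>
lemma entry_below_greedy_row: "s < row!0 \<Longrightarrow> c < length (T s) \<Longrightarrow> T s!c < row!c"
proof (induction c)
  case 0
  then show ?case using qKT1_first[OF T, of s] by auto
next
  case (Suc c)
  then have "T s!c < row!c" "T s!c \<in> cs!c" "Suc c \<le> k" "T s!Suc c \<noteq> row!Suc c"
    using entry_in_colset[of c s] entry_in_colset[of "Suc c" s] by auto
  then show ?case
    using greedy_row_less_Suc[OF greedy, of c "T s!c"] qKT1_Suc_le[OF T Suc.prems(2)] by simp
qed

lemma greedy_row_entries: "x \<in> set row \<Longrightarrow> 0 < x \<and> x \<le> row!0"
proof -
  assume "x \<in> set row"
  then obtain c where "c \<le> k" "x = row!c"
    using greedy_row_length[OF greedy] by (auto simp: in_set_conv_nth less_Suc_eq_le)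
  then show ?thesis
    using pos greedy_row_antimono[OF greedy, of c k] greedy_row_antimono[OF greedy, of 0 c] by simp
qed

lemma fun_upd_greedy_row_inversion:
  fixes r s c defines "T' \<equiv> T(row!0 := row)"
  assumes sr: "s < r" and c: "c < length (T' r)" "c < length (T' s)" and lt: "T' r ! c < T' s ! c"
  shows "Suc c < length (T' s) \<and> T' r ! c < T' s ! Suc c"
proof -
  consider "r = row!0" | "s = row!0" | "r \<noteq> row!0" "s \<noteq> row!0" using sr by blast
  then show ?thesis
  proof cases
    case 1
    then show ?thesis
      using entry_below_greedy_row[of s c] sr c lt unfolding T'_def by auto
  next
    case 2
    then have "T r!c \<in> cs!c" "c \<le> k" "T r!c < row!c"
      using entry_in_colset[of c r] sr c lt unfolding T'_def by auto
    moreover have "c \<noteq> k"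
      using greedy_row_last_le[OF greedy] calculation by fastforce
    ultimately show ?thesis
      using greedy_row_less_Suc[OF greedy, of c "T r!c"] 2 sr greedy_row_length[OF greedy]
      unfolding T'_def by auto
  next
    case 3
    then show ?thesis using qKT1_inversion[OF T sr] c lt unfolding T'_def by auto
  qed
qed

lemma fun_upd_greedy_row_longer:
  fixes r s c defines "T' \<equiv> T(row!0 := row)"
  assumes sr: "s < r" and l: "length (T' s) < length (T' r)"
    and c: "c < length (T' s)" "Suc c < length (T' r)"
  shows "T' s ! c < T' r ! Suc c"
proof -
  consider "r = row!0" | "s = row!0" | "r \<noteq> row!0" "s \<noteq> row!0" using sr by blast
  then show ?thesis
  proof cases
    case 1
    then have "T s!c \<in> cs!c" "T s!c < row!c" "c < k"
      using entry_in_colset[of c s] entry_below_greedy_row[of s c] sr c greedy_row_length[OF greedy]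
      unfolding T'_def by auto
    then show ?thesis
      using greedy_row_less_Suc[OF greedy, of c "T s!c"] 1 sr unfolding T'_def by auto
  next
    case 2
    then show ?thesis using l sr lengths greedy_row_length[OF greedy] unfolding T'_def
      by (metis fun_upd_apply leD less_irrefl)
  next
    case 3
    then show ?thesis using qKT1_longer[OF T sr] l c unfolding T'_def by auto
  qed
qed

lemma qKT1_fun_upd_greedy_row: "T(row!0 := row) \<in> qKT1"
proof (rule qKT1I)
  let ?T = "T(row!0 := row)"
  show "?T 0 = []"
    using qKT1_zero[OF T] greedy_row_entries[of "row!0"] greedy_row_length[OF greedy]
    by (cases row) auto
  show "finite {i. ?T i \<noteq> []}"
    by (rule finite_subset[of _ "insert (row!0) {i. T i \<noteq> []}"]) (use qKT1_finite[OF T] in auto)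
  show "\<And>i x. x \<in> set (?T i) \<Longrightarrow> 0 < x" "\<And>i x. x \<in> set (?T i) \<Longrightarrow> x \<le> i"
    using qKT1_pos[OF T] qKT1_le_index[OF T] greedy_row_entries by (auto split: if_splits)
  show "\<And>i. sorted_wrt (\<ge>) (?T i)"
    using qKT1_sorted[OF T] greedy_row_sorted[OF greedy] by simp
  show "\<And>i. ?T i \<noteq> [] \<Longrightarrow> ?T i ! 0 = i"
    using qKT1_first[OF T] by auto
  show "\<And>r s c. r \<noteq> s \<Longrightarrow> c < length (?T r) \<Longrightarrow> c < length (?T s) \<Longrightarrow> ?T r ! c \<noteq> ?T s ! c"
    using qKT1_column_distinct[OF T] entry_in_colset by (auto split: if_splits) metis+
qed (fact fun_upd_greedy_row_inversion fun_upd_greedy_row_longer)+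

end

section \<open>Dominated column sets\<close>

definition card_ge :: "nat set \<Rightarrow> nat \<Rightarrow> nat" where
  "card_ge C t = card {x \<in> C. t \<le> x}"

text \<open>The column sets of a reverse semistandard tableau, read left to right, are
exactly the sequences of finite sets of positive integers in which each set is
dominated by its left neighbour in this sense.\<close>
definition colsets_dominated :: "nat set list \<Rightarrow> bool" where
  "colsets_dominated cs \<longleftrightarrow> (\<forall>C\<in>set cs. finite C \<and> (\<forall>x\<in>C. 0 < x)) \<and>
     (\<forall>c t. Suc c < length cs \<longrightarrow> card_ge (cs!Suc c) t \<le> card_ge (cs!c) t)"

lemma card_ge_0 [simp]: "card_ge C 0 = card C"
  unfolding card_ge_def by simp

lemma card_ge_Diff_singleton:
  "finite C \<Longrightarrow> card_ge (C - {x}) t = (if x \<in> C \<and> t \<le> x then card_ge C t - 1 else card_ge C t)"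
proof -
  have "{y \<in> C - {x}. t \<le> y} = {y \<in> C. t \<le> y} - {x}" by auto
  then show "finite C \<Longrightarrow> ?thesis" unfolding card_ge_def by (simp add: card_Diff_singleton_if)
qed

lemma card_ge_mono: "finite B \<Longrightarrow> A \<subseteq> B \<Longrightarrow> card_ge A t \<le> card_ge B t"
  unfolding card_ge_def by (rule card_mono) auto

text \<open>The common source of dominance for tableaux and fillings: entries of column c+1
sit to the right of weakly larger entries of column c in the same rows.\<close>
lemma card_ge_image_le:
  assumes "finite S" "inj_on f S" "inj_on g S" "\<And>r. r \<in> S \<Longrightarrow> f r \<le> (g r :: nat)"
  shows "card_ge (f ` S) t \<le> card_ge (g ` S) t"
proof -
  have "{x \<in> f ` S. t \<le> x} = f ` {r \<in> S. t \<le> f r}" "{x \<in> g ` S. t \<le> x} = g ` {r \<in> S. t \<le> g r}"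
    by auto
  moreover have "card {r \<in> S. t \<le> f r} \<le> card {r \<in> S. t \<le> g r}"
    using assms(1,4) by (intro card_mono) (auto intro: order_trans)
  ultimately show ?thesis
    unfolding card_ge_def using assms(2,3)
    by (simp add: card_image inj_on_subset[of _ S])
qed

context
  fixes cs assumes dom: "colsets_dominated cs"
begin

lemma colsets_dominated_finite: "c < length cs \<Longrightarrow> finite (cs!c)"
  and colsets_dominated_pos: "c < length cs \<Longrightarrow> x \<in> cs!c \<Longrightarrow> 0 < x"
  and colsets_dominated_card_ge: "Suc c < length cs \<Longrightarrow> card_ge (cs!Suc c) t \<le> card_ge (cs!c) t"
  using dom unfolding colsets_dominated_def by auto

lemma colsets_dominated_card_le: "c < length cs \<Longrightarrow> card (cs!c) \<le> card (cs!0)"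
proof (induction c)
  case (Suc c)
  then show ?case using colsets_dominated_card_ge[of c 0] by simp
qed simp

lemma colsets_dominated_ex_ge:
  assumes "Suc c < length cs" "z \<in> cs!Suc c"
  shows "\<exists>y\<in>cs!c. z \<le> y"
proof -
  have "0 < card_ge (cs!Suc c) z"
    unfolding card_ge_def using assms colsets_dominated_finite by (subst card_gt_0_iff) auto
  then have "0 < card_ge (cs!c) z"
    using colsets_dominated_card_ge[OF assms(1)] by (meson less_le_trans)
  then show ?thesis
    unfolding card_ge_def by (metis (mono_tags, lifting) card.empty empty_Collect_eq less_irrefl)
qed

lemma colsets_dominated_greedy_row_exists:
  "k < length cs \<Longrightarrow> cs!k \<noteq> {} \<Longrightarrow> \<exists>row. greedy_row cs k row"
  by (rule greedy_row_exists) (auto intro: colsets_dominated_ex_ge)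

end

text \<open>Removing b from B and its greedy partner a (the least element of A not below b)
from A keeps B dominated by A: for thresholds t in (b, a] the count for B drops
strictly below the count at b, which A still matches.\<close>
lemma card_ge_Diff_greedy_pair:
  assumes fin: "finite A" "finite B" and dom: "\<And>t. card_ge B t \<le> card_ge A t"
    and ab: "a \<in> A" "b \<in> B" "b \<le> a" and least: "\<forall>y\<in>A. b \<le> y \<longrightarrow> a \<le> y"
  shows "card_ge (B - {b}) t \<le> card_ge (A - {a}) t"
proof (cases "t \<le> b \<or> a < t")
  case True
  then show ?thesis using dom[of t] ab unfolding card_ge_Diff_singleton[OF fin(1)] card_ge_Diff_singleton[OF fin(2)]
    by auto
next
  case False
  then have tb: "b < t" "t \<le> a" by auto
  have "{x\<in>B. t \<le> x} \<subset> {x\<in>B. b \<le> x}"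
  proof (rule psubsetI)
    show "{x\<in>B. t \<le> x} \<subseteq> {x\<in>B. b \<le> x}" using tb by auto
    show "{x\<in>B. t \<le> x} \<noteq> {x\<in>B. b \<le> x}" using tb ab by (metis (lifting) mem_Collect_eq not_le order_refl)
  qed
  then have "card_ge B t < card_ge B b" unfolding card_ge_def using fin by (intro psubset_card_mono) auto
  moreover have "{x\<in>A. b \<le> x} = {x\<in>A. t \<le> x}" using least tb by force
  then have "card_ge A b = card_ge A t" unfolding card_ge_def by simp
  ultimately have "card_ge B t < card_ge A t" using dom[of b] by simp
  then show ?thesis using tb ab unfolding card_ge_Diff_singleton[OF fin(1)] card_ge_Diff_singleton[OF fin(2)]
    by simp
qed

lemma colsets_dominated_delete_row:
  assumes dom: "colsets_dominated cs" and greedy: "greedy_row cs k row"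
    and beyond: "\<And>c. k < c \<Longrightarrow> c < length cs \<Longrightarrow> cs!c = {}"
  shows "colsets_dominated (delete_row cs row)"
proof -
  have len: "length row = Suc k" using greedy_row_length[OF greedy] .
  have nth: "delete_row cs row ! i = (if i \<le> k then cs!i - {row!i} else cs!i)" if "i < length cs" for i
    using that len unfolding delete_row_def by simp
  have "card_ge (delete_row cs row ! Suc c) t \<le> card_ge (delete_row cs row ! c) t"
    if c: "Suc c < length cs" for c t
  proof (cases "c < k")
    case True
    then show ?thesis
      using nth[of c] nth[OF c] c card_ge_Diff_greedy_pair[of "cs!c" "cs!Suc c" "row!c" "row!Suc c" t]
        colsets_dominated_finite[OF dom] colsets_dominated_card_ge[OF dom c]
        greedy_row_mem[OF greedy] greedy_row_Suc_le[OF greedy] greedy_row_least[OF greedy]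
      by simp
  next
    case False
    then show ?thesis using nth[OF c] beyond c unfolding card_ge_def by simp
  qed
  moreover have "finite C \<and> (\<forall>x\<in>C. 0 < x)" if "C \<in> set (delete_row cs row)" for C
  proof -
    obtain i where "i < length cs" "C \<subseteq> cs!i"
      using \<open>C \<in> set (delete_row cs row)\<close> unfolding delete_row_def by auto
    then show ?thesis
      using colsets_dominated_finite[OF dom] colsets_dominated_pos[OF dom] by (meson finite_subset subsetD)
  qed
  ultimately show ?thesis unfolding colsets_dominated_def by (simp add: delete_row_def)
qed

section \<open>Running the right row-filling\<close>

lemma max_nonempty_colset:
  assumes "\<not> all_empty cs"
  defines "k \<equiv> Max {i. i < length cs \<and> cs!i \<noteq> {}}"
  shows "k < length cs" "cs!k \<noteq> {}" "\<And>c. k < c \<Longrightarrow> c < length cs \<Longrightarrow> cs!c = {}"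
proof -
  let ?K = "{i. i < length cs \<and> cs!i \<noteq> {}}"
  have "?K \<noteq> {}" using assms(1) unfolding all_empty_def by (auto simp: in_set_conv_nth)
  then have "k \<in> ?K" unfolding k_def using Max_in[of ?K] by simp
  then show "k < length cs" "cs!k \<noteq> {}" by simp_all
  show "cs!c = {}" if "k < c" "c < length cs" for c
    using that Max_ge[of ?K c] unfolding k_def by fastforce
qed

lemma psi_aux_Suc_greedy_row:
  assumes "\<not> all_empty cs" "k = Max {i. i < length cs \<and> cs!i \<noteq> {}}" "greedy_row cs k row"
    and "psi_aux n (delete_row cs row) = Some T"
  shows "psi_aux (Suc n) cs = Some (T(row!0 := row))"
proof -
  have "hd row = row!0" using greedy_row_length[OF assms(3)] by (cases row) auto
  then show ?thesis using assms psi_step_greedy_row[OF assms(2,3)] by simp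
qed

text \<open>T is the filling obtained recursively from the column sets left after
removing the greedy row.\<close>
lemma qKT1_add_greedy_row:
  assumes dom: "colsets_dominated cs" and greedy: "greedy_row cs k row"
    and beyond: "\<And>c. k < c \<Longrightarrow> c < length cs \<Longrightarrow> cs!c = {}"
    and T: "T \<in> qKT1" and colsets: "\<forall>c<length cs. fil_colset T c = delete_row cs row ! c"
    and lengths: "\<forall>i. length (T i) \<le> length cs"
  shows "T(row!0 := row) \<in> qKT1 \<and> (\<forall>c<length cs. fil_colset (T(row!0 := row)) c = cs!c) \<and>
    (\<forall>i. length ((T(row!0 := row)) i) \<le> length cs)"
proof (intro conjI allI impI)
  have len: "length row = Suc k" and k: "k < length cs"
    using greedy unfolding greedy_row_def greedy_chain_def by auto
  have colsets_k: "\<forall>c\<le>k. fil_colset T c = cs!c - {row!c}"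
    using colsets k len by auto
  have lengths_k: "\<forall>i. length (T i) \<le> Suc k"
  proof (rule ccontr)
    assume "\<not> (\<forall>i. length (T i) \<le> Suc k)"
    then obtain i where i: "Suc k < length (T i)" by (auto simp: not_le)
    then have "Suc k < length cs" using lengths[rule_format, of i] by simp
    then have "fil_colset T (Suc k) = {}" using colsets beyond[of "Suc k"] len by simp
    then show False using i fil_colset_eq_empty_iff[of T "Suc k"] by (meson leD)
  qed
  have T_row: "T (row!0) = []"
  proof (rule ccontr)
    assume ne: "T (row!0) \<noteq> []"
    then have "T (row!0) ! 0 \<in> fil_colset T 0" unfolding fil_colset_def by auto
    then show False using qKT1_first[OF T ne] colsets_k by auto
  qed
  have "0 < row!k"
    using colsets_dominated_pos[OF dom k] greedy_row_mem[OF greedy] by simp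
  then show "T(row!0 := row) \<in> qKT1"
    using qKT1_fun_upd_greedy_row[OF T greedy T_row colsets_k lengths_k] by simp
  show "fil_colset (T(row!0 := row)) c = cs!c" if "c < length cs" for c
    using that colsets colsets_k greedy_row_mem[OF greedy, of c] beyond[of c] len
    unfolding fil_colset_fun_upd_Nil_row[where T=T, OF T_row] by (cases "c \<le> k") auto
  show "length ((T(row!0 := row)) i) \<le> length cs" for i
    using lengths len k by simp
qed

text \<open>Each step removes one element of the first column set, so card (cs!0) steps of
fuel suffice.\<close>
lemma psi_aux_colsets_dominated:
  assumes "colsets_dominated cs" and "cs \<noteq> [] \<Longrightarrow> card (cs!0) \<le> n"
  shows "\<exists>T. psi_aux n cs = Some T \<and> T \<in> qKT1 \<and> (\<forall>c<length cs. fil_colset T c = cs!c) \<and>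
    (\<forall>i. length (T i) \<le> length cs)"
  using assms
proof (induction n arbitrary: cs)
  case 0
  have "all_empty cs"
    unfolding all_empty_def
  proof
    fix C assume "C \<in> set cs"
    then obtain c where c: "c < length cs" "C = cs!c" by (auto simp: in_set_conv_nth)
    then have "card C = 0"
      using "0.prems" colsets_dominated_card_le[OF "0.prems"(1) c(1)] by fastforce
    then show "C = {}"
      using colsets_dominated_finite[OF "0.prems"(1) c(1)] c(2) by simp
  qed
  then show ?case using qKT1_empty by (auto simp: fil_colset_def all_empty_def)
next
  case (Suc n)
  note dom = Suc.prems(1)
  show ?case
  proof (cases "all_empty cs")
    case True
    then show ?thesis using qKT1_empty by (auto simp: fil_colset_def all_empty_def)
  next
    case nonempty: False
    define k where "k = Max {i. i < length cs \<and> cs!i \<noteq> {}}"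
    note k = max_nonempty_colset(1,2)[OF nonempty, folded k_def]
      and beyond = max_nonempty_colset(3)[OF nonempty, folded k_def]
    obtain row where greedy: "greedy_row cs k row"
      using colsets_dominated_greedy_row_exists[OF dom k] by blast
    have len: "length row = Suc k" by (rule greedy_row_length[OF greedy])
    have cs0: "0 < length cs" using k(1) by (cases cs) auto
    have "card (delete_row cs row ! 0) = card (cs!0) - 1"
      using greedy_row_mem[OF greedy, of 0] colsets_dominated_finite[OF dom cs0] len cs0 by simp
    then have "card (delete_row cs row ! 0) \<le> n" using Suc.prems(2) cs0 by fastforce
    then obtain T where T: "psi_aux n (delete_row cs row) = Some T" "T \<in> qKT1"
      and colsets: "\<forall>c<length cs. fil_colset T c = delete_row cs row ! c"
      and lengths: "\<forall>i. length (T i) \<le> length cs"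
      using Suc.IH[OF colsets_dominated_delete_row[OF dom greedy beyond]] by fastforce
    have "T(row!0 := row) \<in> qKT1 \<and> (\<forall>c<length cs. fil_colset (T(row!0 := row)) c = cs!c) \<and>
        (\<forall>i. length ((T(row!0 := row)) i) \<le> length cs)"
      by (rule qKT1_add_greedy_row[OF dom greedy beyond T(2) colsets lengths])
    then show ?thesis
      using psi_aux_Suc_greedy_row[OF nonempty k_def greedy T(1)] by blast
  qed
qed

text \<open>Conversely, in a filling in qKT1 the row through the least entry of the last
nonempty column is exactly the greedy row; conditions (3) and (4) rule out every
smaller admissible choice.\<close>
lemma qKT1_greedy_row:
  assumes T: "T \<in> qKT1" and lengths: "\<forall>i. length (T i) \<le> Suc k" and j: "length (T j) = Suc k"
    and least: "\<forall>y\<in>fil_colset T k. T j ! k \<le> y" and kL: "k < L"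
  shows "greedy_row (map (fil_colset T) [0..<L]) k (T j)"
proof (rule greedy_rowI)
  show "T j ! c \<in> map (fil_colset T) [0..<L] ! c" if "c \<le> k" for c
    using that j kL unfolding fil_colset_def by auto
  show "T j ! k \<le> y" if "y \<in> map (fil_colset T) [0..<L] ! k" for y
    using that least kL by simp
  show "T j ! Suc c \<le> T j ! c" if "c < k" for c
    using that j qKT1_Suc_le[OF T] by simp
  show "T j ! c \<le> y"
    if c: "c < k" and y: "y \<in> map (fil_colset T) [0..<L] ! c" and le: "T j ! Suc c \<le> y" for c y
  proof (rule ccontr)
    assume "\<not> T j ! c \<le> y"
    obtain s where s: "y = T s ! c" "c < length (T s)"
      using y c kL unfolding fil_colset_def by auto
    with \<open>\<not> T j ! c \<le> y\<close> have lt: "T s ! c < T j ! c" and "s \<noteq> j" by auto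
    consider "j < s" | "s < j" "length (T s) < length (T j)" | "s < j" "length (T s) = Suc k"
      using \<open>s \<noteq> j\<close> lengths j by (metis le_neq_implies_less nat_neq_iff)
    then show False
    proof cases
      case 1
      then show False using qKT1_inversion[OF T 1 s(2) _ lt] j c le s(1) by simp
    next
      case 2
      have "Suc c < length (T j)" using c j by simp
      then show False using qKT1_longer[OF T 2 s(2)] s(1) le by simp
    next
      case 3
      have "T s ! k \<in> fil_colset T k" using 3(2) unfolding fil_colset_def by auto
      then have "T j ! k \<le> T s ! k" using least by blast
      moreover have "T j ! k \<noteq> T s ! k" using qKT1_column_distinct[OF T \<open>s \<noteq> j\<close>[symmetric]] j 3(2) by simp
      ultimately show False using qKT1_inversion[OF T 3(1), of k] j 3(2) by simp
    qed
  qed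
qed (use j kL in simp_all)

lemma qKT1_greedy_row_exists:
  assumes T: "T \<in> qKT1" and L: "\<forall>i. length (T i) \<le> L"
    and nonempty: "\<not> all_empty (map (fil_colset T) [0..<L])"
    and k: "k = Max {i. i < length (map (fil_colset T) [0..<L]) \<and> map (fil_colset T) [0..<L] ! i \<noteq> {}}"
  shows "\<exists>j. greedy_row (map (fil_colset T) [0..<L]) k (T j)"
proof -
  let ?cs = "map (fil_colset T) [0..<L]"
  have "k < L" "fil_colset T k \<noteq> {}"
    and beyond: "\<And>c. k < c \<Longrightarrow> c < L \<Longrightarrow> fil_colset T c = {}"
    using max_nonempty_colset[OF nonempty, folded k] by auto
  have lengths: "\<forall>i. length (T i) \<le> Suc k"
  proof (cases "Suc k < L")
    case True
    then show ?thesis using beyond[of "Suc k"] fil_colset_eq_empty_iff[of T "Suc k"] by simp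
  next
    case False
    then have "L = Suc k" using \<open>k < L\<close> by simp
    then show ?thesis using L by simp
  qed
  define y where "y = (LEAST y. y \<in> fil_colset T k)"
  have y: "y \<in> fil_colset T k" "\<forall>z\<in>fil_colset T k. y \<le> z"
    using \<open>fil_colset T k \<noteq> {}\<close> unfolding y_def by (auto intro: LeastI Least_le)
  then obtain j where "y = T j ! k" "k < length (T j)"
    unfolding fil_colset_def by blast
  then have "greedy_row ?cs k (T j)"
    using qKT1_greedy_row[OF T lengths _ _ \<open>k < L\<close>] lengths[rule_format, of j] y(2) by simp
  then show ?thesis ..
qed

lemma delete_row_fil_colsets:
  assumes "T \<in> qKT1"
  shows "delete_row (map (fil_colset T) [0..<L]) (T j) = map (fil_colset (T(j := []))) [0..<L]"
  by (rule nth_equalityI) (simp_all add: fil_colset_fun_upd_Nil[OF assms])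

lemma psi_aux_fil_colsets:
  assumes "T \<in> qKT1" "\<forall>i. length (T i) \<le> L" "card {i. T i \<noteq> []} \<le> n"
  shows "psi_aux n (map (fil_colset T) [0..<L]) = Some T"
  using assms
proof (induction n arbitrary: T)
  case 0
  then have "T = (\<lambda>_. [])" using qKT1_finite[OF "0.prems"(1)] by auto
  then show ?case by (simp add: all_empty_def fil_colset_def)
next
  case (Suc n T)
  note T = Suc.prems(1)
  let ?cs = "map (fil_colset T) [0..<L]"
  show ?case
  proof (cases "\<forall>i. T i = []")
    case True
    then have "T = (\<lambda>_. [])" by auto
    then show ?thesis by (simp add: all_empty_def fil_colset_def)
  next
    case False
    then obtain i0 where "0 < length (T i0)" by auto
    then have "0 < L" "fil_colset T 0 \<noteq> {}"
      using less_le_trans Suc.prems(2) unfolding fil_colset_def by blast+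
    then have nonempty: "\<not> all_empty ?cs" by (auto simp: all_empty_def)
    define k where "k = Max {i. i < length ?cs \<and> ?cs!i \<noteq> {}}"
    obtain j where greedy: "greedy_row ?cs k (T j)"
      using qKT1_greedy_row_exists[OF T Suc.prems(2) nonempty k_def] by blast
    have j: "T j \<noteq> []" using greedy_row_length[OF greedy] by auto
    have "card {i. (T(j := [])) i \<noteq> []} \<le> n"
    proof -
      have "{i. (T(j := [])) i \<noteq> []} = {i. T i \<noteq> []} - {j}" by auto
      moreover have "j \<in> {i. T i \<noteq> []}" using j by simp
      ultimately have "card {i. (T(j := [])) i \<noteq> []} = card {i. T i \<noteq> []} - 1"
        using qKT1_finite[OF T] by (simp only: card_Diff_singleton)
      then show ?thesis using Suc.prems(3) by simp
    qed
    moreover have "\<forall>i. length ((T(j := [])) i) \<le> L" using Suc.prems(2) by simp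
    ultimately have "psi_aux n (delete_row ?cs (T j)) = Some (T(j := []))"
      using Suc.IH[OF qKT1_fun_upd_Nil[OF T]] unfolding delete_row_fil_colsets[OF T] by blast
    moreover have "T j ! 0 = j" using qKT1_first[OF T j] .
    ultimately show ?thesis
      using psi_aux_Suc_greedy_row[OF nonempty k_def greedy] by simp
  qed
qed

section \<open>Tableaux built from their columns\<close>

lemma sorted_wrt_greater_distinct: "sorted_wrt (>) (xs :: nat list) \<Longrightarrow> distinct xs"
  by (induction xs) auto

lemma dominated_sorted_lists:
  fixes xs ys :: "nat list"
  assumes sx: "sorted_wrt (>) xs" and sy: "sorted_wrt (>) ys"
    and dom: "\<And>t. card_ge (set ys) t \<le> card_ge (set xs) t"
  shows "length ys \<le> length xs" and "r < length ys \<Longrightarrow> ys!r \<le> xs!r"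
proof -
  have dx: "distinct xs" "distinct ys" using sx sy by (auto intro: sorted_wrt_greater_distinct)
  show len: "length ys \<le> length xs" using dom[of 0] dx by (simp add: distinct_card)
  assume r: "r < length ys"
  have "set (take (Suc r) ys) \<subseteq> {y \<in> set ys. ys!r \<le> y}"
  proof
    fix y assume "y \<in> set (take (Suc r) ys)"
    then obtain j where j: "j \<le> r" "y = ys!j" using r by (auto simp: in_set_conv_nth less_Suc_eq_le)
    then have "ys!r \<le> ys!j" using sorted_wrt_nth_less[OF sy, of j r] r by (cases "j = r") auto
    then show "y \<in> {y \<in> set ys. ys!r \<le> y}" using j r by auto
  qed
  then have "card (set (take (Suc r) ys)) \<le> card_ge (set ys) (ys!r)"
    unfolding card_ge_def by (intro card_mono) auto
  moreover have "card (set (take (Suc r) ys)) = Suc r" using dx(2) r by (simp add: distinct_card)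
  ultimately have many: "Suc r \<le> card_ge (set xs) (ys!r)" using dom[of "ys!r"] by simp
  show "ys!r \<le> xs!r"
  proof (rule ccontr)
    assume "\<not> ys!r \<le> xs!r"
    then have lt: "xs!r < ys!r" by simp
    have "{x \<in> set xs. ys!r \<le> x} \<subseteq> set (take r xs)"
    proof
      fix x assume "x \<in> {x \<in> set xs. ys!r \<le> x}"
      then obtain j where j: "j < length xs" "x = xs!j" "ys!r \<le> x" by (auto simp: in_set_conv_nth)
      have "j < r"
      proof (rule ccontr)
        assume "\<not> j < r"
        then have "xs!j \<le> xs!r" using sorted_wrt_nth_less[OF sx, of r j] j by (cases "j = r") auto
        then show False using j lt by simp
      qed
      then show "x \<in> set (take r xs)" using j by (auto simp: in_set_conv_nth intro!: exI[of _ j])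
    qed
    then have "card_ge (set xs) (ys!r) \<le> card (set (take r xs))" unfolding card_ge_def by (intro card_mono) auto
    also have "\<dots> \<le> r" using card_length[of "take r xs"] by simp
    finally show False using many by simp
  qed
qed

lemma member_le_foldr_max: "x \<in> set xs \<Longrightarrow> f x \<le> foldr max (map f xs) (0::nat)"
  by (induction xs) auto

lemma foldr_max_le: "(\<forall>x\<in>set xs. f x \<le> B) \<Longrightarrow> foldr max (map f xs) (0::nat) \<le> B"
  by (induction xs) auto

lemma filter_upt_downward_closed:
  assumes "\<forall>i j. i \<le> j \<longrightarrow> j < n \<longrightarrow> P j \<longrightarrow> P i"
  shows "filter P [0..<n] = [0..<length (filter P [0..<n])]"
  using assms
proof (induction n)
  case (Suc n)
  show ?case
  proof (cases "P n")
    case True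
    then have "\<forall>i<n. P i" using Suc.prems by (meson less_Suc_eq less_imp_le_nat)
    then show ?thesis using True by (simp add: filter_id_conv)
  next
    case False
    then show ?thesis using Suc by simp
  qed
qed simp

definition tab_of_columns :: "nat \<Rightarrow> (nat \<Rightarrow> nat list) \<Rightarrow> tableau" where
  "tab_of_columns W pc = (let H = foldr max (map (\<lambda>c. length (pc c)) [0..<W]) 0 in
     map (\<lambda>r. map (\<lambda>c. pc c ! r) (filter (\<lambda>c. r < length (pc c)) [0..<W])) [0..<H])"

lemma phi_eq_tab_of_columns: "phi F = tab_of_columns (fil_width F) (phi_col F)"
  unfolding phi_def tab_of_columns_def Let_def ..

context
  fixes W :: nat and pc :: "nat \<Rightarrow> nat list"
  assumes antimono: "\<And>c c'. c \<le> c' \<Longrightarrow> c' < W \<Longrightarrow> length (pc c') \<le> length (pc c)"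
begin

lemma filter_columns_eq_upt:
  "filter (\<lambda>c. r < length (pc c)) [0..<W] = [0..<length (filter (\<lambda>c. r < length (pc c)) [0..<W])]"
  by (rule filter_upt_downward_closed) (use antimono in fastforce)

lemma length_tab_of_columns: "length (tab_of_columns W pc) = (if W = 0 then 0 else length (pc 0))"
proof -
  have "W \<noteq> 0 \<Longrightarrow> foldr max (map (\<lambda>c. length (pc c)) [0..<W]) 0 = length (pc 0)"
    using member_le_foldr_max[of 0 "[0..<W]" "\<lambda>c. length (pc c)"] antimono[of 0]
      foldr_max_le[of "[0..<W]" "\<lambda>c. length (pc c)" "length (pc 0)"] by fastforce
  then show ?thesis unfolding tab_of_columns_def Let_def by simp
qed

lemma mem_filter_columns_iff:
  "c < length (filter (\<lambda>c. r < length (pc c)) [0..<W]) \<longleftrightarrow> c < W \<and> r < length (pc c)"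
proof -
  have "set (filter (\<lambda>c. r < length (pc c)) [0..<W]) = {0..<length (filter (\<lambda>c. r < length (pc c)) [0..<W])}"
    using arg_cong[where f=set, OF filter_columns_eq_upt[of r]] by simp
  then show ?thesis by (metis (no_types, lifting) atLeastLessThan_iff mem_Collect_eq set_filter set_upt zero_le)
qed

lemma nth_tab_of_columns:
  "r < length (tab_of_columns W pc) \<Longrightarrow>
    tab_of_columns W pc ! r = map (\<lambda>c. pc c ! r) (filter (\<lambda>c. r < length (pc c)) [0..<W])"
  unfolding tab_of_columns_def Let_def by simp

lemma length_nth_tab_of_columns:
  "r < length (tab_of_columns W pc) \<Longrightarrow> c < length (tab_of_columns W pc ! r) \<longleftrightarrow> c < W \<and> r < length (pc c)"
  by (simp add: nth_tab_of_columns mem_filter_columns_iff)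

lemma nth_nth_tab_of_columns:
  assumes "r < length (tab_of_columns W pc)" "c < length (tab_of_columns W pc ! r)"
  shows "tab_of_columns W pc ! r ! c = pc c ! r"
proof -
  have "filter (\<lambda>c. r < length (pc c)) [0..<W] ! c = c"
    using assms filter_columns_eq_upt[of r] by (simp add: nth_tab_of_columns) (metis add_0 nth_upt)
  then show ?thesis using assms by (simp add: nth_tab_of_columns)
qed

lemma tab_colset_tab_of_columns:
  "tab_colset (tab_of_columns W pc) c = (if c < W then set (pc c) else {})"
proof -
  have "r < length (tab_of_columns W pc)" if "c < W" "r < length (pc c)" for r
    using that antimono[of 0 c] by (simp add: length_tab_of_columns)
  then show ?thesis
    unfolding tab_colset_def
    using length_nth_tab_of_columns nth_nth_tab_of_columns
    by (auto simp: in_set_conv_nth) metis+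
qed

end

lemma dominated_columns_mono:
  assumes sorted: "\<And>c. sorted_wrt (>) (pc c)"
    and dom: "\<And>c t. Suc c < W \<Longrightarrow> card_ge (set (pc (Suc c))) t \<le> card_ge (set (pc c)) t"
  shows "c \<le> c' \<Longrightarrow> c' < W \<Longrightarrow> length (pc c') \<le> length (pc c) \<and> (\<forall>r<length (pc c'). pc c' ! r \<le> pc c ! r)"
proof (induction c')
  case (Suc c')
  show ?case
  proof (cases "c = Suc c'")
    case False
    then have "length (pc c') \<le> length (pc c) \<and> (\<forall>r<length (pc c'). pc c' ! r \<le> pc c ! r)"
      using Suc by simp
    moreover have "length (pc (Suc c')) \<le> length (pc c')" "\<forall>r<length (pc (Suc c')). pc (Suc c') ! r \<le> pc c' ! r"
      using dominated_sorted_lists[OF sorted sorted dom[OF Suc.prems(2)]] by auto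
    ultimately show ?thesis by (meson le_trans less_le_trans)
  qed simp
qed simp

lemma tab_of_columns_revSSYT:
  assumes sorted: "\<And>c. sorted_wrt (>) (pc c)" and pos: "\<And>c x. x \<in> set (pc c) \<Longrightarrow> 0 < x"
    and dom: "\<And>c t. Suc c < W \<Longrightarrow> card_ge (set (pc (Suc c))) t \<le> card_ge (set (pc c)) t"
  shows "tab_of_columns W pc \<in> revSSYT"
proof -
  note mono = dominated_columns_mono[where pc=pc and W=W, OF sorted dom]
  have antimono: "length (pc c') \<le> length (pc c)" if "c \<le> c'" "c' < W" for c c'
    using mono that by blast
  define V where "V = tab_of_columns W pc"
  have len: "length V = (if W = 0 then 0 else length (pc 0))"
    unfolding V_def by (rule length_tab_of_columns) (rule antimono)
  have row: "\<And>r c. r < length V \<Longrightarrow> c < length (V!r) \<longleftrightarrow> c < W \<and> r < length (pc c)"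
    unfolding V_def by (rule length_nth_tab_of_columns) (rule antimono)
  have entry: "\<And>r c. r < length V \<Longrightarrow> c < length (V!r) \<Longrightarrow> V!r!c = pc c ! r"
    unfolding V_def by (rule nth_nth_tab_of_columns) (rule antimono)
  show ?thesis
    unfolding V_def[symmetric] revSSYT_def mem_Collect_eq
  proof (intro conjI allI impI ballI)
    fix xs assume "xs \<in> set V"
    then obtain r where r: "r < length V" "xs = V!r" by (auto simp: in_set_conv_nth)
    then have "0 < W" "r < length (pc 0)" using len by (auto split: if_splits)
    then show "xs \<noteq> []" using row[OF r(1), of 0] r(2) by auto
  next
    fix i j assume ij: "i \<le> j \<and> j < length V"
    have "c < length (V!i)" if "c < length (V!j)" for c
      using that ij row[of j c] row[of i c] by auto
    then show "length (V!j) \<le> length (V!i)" by (meson leI less_irrefl)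
  next
    fix xs x assume "xs \<in> set V" "x \<in> set xs"
    then obtain r c where "r < length V" "c < length (V!r)" "x = V!r!c"
      by (auto simp: in_set_conv_nth)
    then show "0 < x" using pos row entry by (metis nth_mem)
  next
    fix xs assume "xs \<in> set V"
    then obtain r where r: "r < length V" "xs = V!r" by (auto simp: in_set_conv_nth)
    show "sorted_wrt (\<ge>) xs"
      unfolding sorted_wrt_iff_nth_less
    proof (intro allI impI)
      fix a b assume "a < b" "b < length xs"
      then show "xs!b \<le> xs!a" using mono[of a b] row[OF r(1)] entry[OF r(1)] r(2) by auto
    qed
  next
    fix i j c assume ijc: "i < j \<and> j < length V \<and> c < length (V!j)"
    then have "c < length (V!i)" "j < length (pc c)" using row by auto
    then show "V!j!c < V!i!c"
      using ijc entry sorted_wrt_nth_less[OF sorted] by auto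
  qed
qed

section \<open>Column sets of reverse semistandard tableaux\<close>

lemma length_le_tab_width: "r < length V \<Longrightarrow> length (V!r) \<le> tab_width V"
  unfolding tab_width_def by (intro member_le_foldr_max) simp

lemma tab_colset_beyond_width: "tab_width V \<le> c \<Longrightarrow> tab_colset V c = {}"
  unfolding tab_colset_def using length_le_tab_width by fastforce

lemma finite_tab_colset: "finite (tab_colset V c)"
proof -
  have "tab_colset V c \<subseteq> (\<lambda>r. V!r!c) ` {..<length V}" unfolding tab_colset_def by auto
  then show ?thesis by (rule finite_subset) simp
qed

context
  fixes V assumes V: "V \<in> revSSYT"
begin

lemma revSSYT_row_nonempty: "r < length V \<Longrightarrow> V!r \<noteq> []"
  using V unfolding revSSYT_def by auto

lemma revSSYT_length_antimono: "i \<le> j \<Longrightarrow> j < length V \<Longrightarrow> length (V!j) \<le> length (V!i)"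
  using V unfolding revSSYT_def by blast

lemma revSSYT_pos: "r < length V \<Longrightarrow> c < length (V!r) \<Longrightarrow> 0 < V!r!c"
proof -
  assume "r < length V" "c < length (V!r)"
  then have "V!r \<in> set V" "V!r!c \<in> set (V!r)" by simp_all
  then show ?thesis using V unfolding revSSYT_def by blast
qed

lemma revSSYT_row_antimono: "r < length V \<Longrightarrow> c < c' \<Longrightarrow> c' < length (V!r) \<Longrightarrow> V!r!c' \<le> V!r!c"
proof -
  assume "r < length V" "c < c'" "c' < length (V!r)"
  moreover have "sorted_wrt (\<ge>) (V!r)" using V \<open>r < length V\<close> unfolding revSSYT_def by simp
  ultimately show ?thesis by (simp add: sorted_wrt_iff_nth_less)
qed

lemma revSSYT_column_less: "i < j \<Longrightarrow> j < length V \<Longrightarrow> c < length (V!j) \<Longrightarrow> V!j!c < V!i!c"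
  using V unfolding revSSYT_def by blast

end

definition tab_col :: "tableau \<Rightarrow> nat \<Rightarrow> nat list" where
  "tab_col V c = map (\<lambda>r. V!r!c) (filter (\<lambda>r. c < length (V!r)) [0..<length V])"

context
  fixes V assumes V: "V \<in> revSSYT"
begin

lemma filter_rows_eq_upt:
  "filter (\<lambda>r. c < length (V!r)) [0..<length V] = [0..<length (tab_col V c)]"
  unfolding tab_col_def using revSSYT_length_antimono[OF V]
  by (subst filter_upt_downward_closed) (fastforce, simp)+

lemma length_tab_col_iff: "r < length (tab_col V c) \<longleftrightarrow> r < length V \<and> c < length (V!r)"
proof -
  have "r \<in> set (filter (\<lambda>r. c < length (V!r)) [0..<length V]) \<longleftrightarrow> r < length (tab_col V c)"
    unfolding filter_rows_eq_upt by simp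
  then show ?thesis by auto
qed

lemma nth_tab_col: "r < length (tab_col V c) \<Longrightarrow> tab_col V c ! r = V!r!c"
  using filter_rows_eq_upt[of c] unfolding tab_col_def
  by (metis (no_types, lifting) add_0 length_map nth_map nth_upt)

lemma sorted_tab_col: "sorted_wrt (>) (tab_col V c)"
  unfolding sorted_wrt_iff_nth_less
proof (intro allI impI)
  fix i j assume ij: "i < j" "j < length (tab_col V c)"
  then have "j < length V" "c < length (V!j)" using length_tab_col_iff by auto
  then show "tab_col V c ! j < tab_col V c ! i"
    using revSSYT_column_less[OF V ij(1)] nth_tab_col ij by simp
qed

lemma set_tab_col: "set (tab_col V c) = tab_colset V c"
proof (intro set_eqI iffI)
  fix x assume "x \<in> set (tab_col V c)"
  then obtain r where "r < length (tab_col V c)" "x = tab_col V c ! r" by (auto simp: in_set_conv_nth)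
  then show "x \<in> tab_colset V c" unfolding tab_colset_def using length_tab_col_iff nth_tab_col by auto
next
  fix x assume "x \<in> tab_colset V c"
  then obtain r where r: "r < length V" "c < length (V!r)" "x = V!r!c" unfolding tab_colset_def by auto
  then have "r < length (tab_col V c)" using length_tab_col_iff by simp
  then show "x \<in> set (tab_col V c)" using nth_tab_col r by (metis nth_mem)
qed

lemma length_tab_col_0: "length (tab_col V 0) = length V"
proof -
  have "r < length (tab_col V 0) \<longleftrightarrow> r < length V" for r
    using length_tab_col_iff revSSYT_row_nonempty[OF V] by auto
  then show ?thesis by (metis nat_neq_iff)
qed

end

lemma sorted_wrt_greater_eqI:
  fixes xs ys :: "nat list"
  assumes "sorted_wrt (>) xs" "sorted_wrt (>) ys" "set xs = set ys"
  shows "xs = ys"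
proof -
  have "sorted_wrt (<) (rev xs)" "sorted_wrt (<) (rev ys)" using assms by (simp_all add: sorted_wrt_rev)
  then have "rev xs = rev ys"
    using assms(3) sorted_distinct_set_unique[of "rev xs" "rev ys"] unfolding strict_sorted_iff by simp
  then show ?thesis by simp
qed

text \<open>A reverse semistandard tableau is determined by its column sets: each column,
read downwards, is its column set in decreasing order.\<close>
lemma revSSYT_eqI:
  assumes V: "V \<in> revSSYT" and V': "V' \<in> revSSYT" and eq: "\<And>c. tab_colset V c = tab_colset V' c"
  shows "V = V'"
proof -
  have col: "tab_col V c = tab_col V' c" for c
    using sorted_wrt_greater_eqI[OF sorted_tab_col[OF V] sorted_tab_col[OF V']] set_tab_col[OF V] set_tab_col[OF V'] eq
    by simp
  have len: "length V = length V'"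
    using length_tab_col_0[OF V] length_tab_col_0[OF V'] col[of 0] by simp
  show ?thesis
  proof (rule nth_equalityI[OF len])
    fix r assume r: "r < length V"
    have "c < length (V!r) \<longleftrightarrow> c < length (V'!r)" for c
      using length_tab_col_iff[OF V] length_tab_col_iff[OF V'] col r len by metis
    then have lr: "length (V!r) = length (V'!r)" by (metis nat_neq_iff)
    show "V!r = V'!r"
    proof (rule nth_equalityI[OF lr])
      fix c assume c: "c < length (V!r)"
      then have "r < length (tab_col V c)" using length_tab_col_iff[OF V] r by simp
      then show "V!r!c = V'!r!c" using nth_tab_col[OF V] nth_tab_col[OF V'] col by metis
    qed
  qed
qed

lemma colsets_dominated_tab_colsets:
  assumes V: "V \<in> revSSYT"
  shows "colsets_dominated (tab_colsets V)"
  unfolding colsets_dominated_def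
proof (intro conjI ballI allI impI)
  fix C assume "C \<in> set (tab_colsets V)"
  then obtain c where C: "C = tab_colset V c" unfolding tab_colsets_def by auto
  then show "finite C" by (simp add: finite_tab_colset)
  fix x assume "x \<in> C"
  then show "0 < x" using C revSSYT_pos[OF V] unfolding tab_colset_def by auto
next
  fix c t assume "Suc c < length (tab_colsets V)"
  define S where "S = {r. r < length V \<and> Suc c < length (V!r)}"
  have image: "tab_colset V (Suc c) = (\<lambda>r. V!r!Suc c) ` S" unfolding tab_colset_def S_def by blast
  have "card_ge (tab_colset V (Suc c)) t \<le> card_ge ((\<lambda>r. V!r!c) ` S) t"
    unfolding image
  proof (rule card_ge_image_le)
    show "inj_on (\<lambda>r. V!r!Suc c) S" "inj_on (\<lambda>r. V!r!c) S"
      unfolding S_def inj_on_def using revSSYT_column_less[OF V]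
      by (metis (no_types, lifting) Suc_lessD less_irrefl linorder_neqE_nat mem_Collect_eq)+
  qed (use revSSYT_row_antimono[OF V] in \<open>auto simp: S_def\<close>)
  also have "\<dots> \<le> card_ge (tab_colset V c) t"
    by (rule card_ge_mono[OF finite_tab_colset]) (auto simp: S_def tab_colset_def)
  finally show "card_ge (tab_colsets V ! Suc c) t \<le> card_ge (tab_colsets V ! c) t"
    using \<open>Suc c < length (tab_colsets V)\<close> unfolding tab_colsets_def by simp
qed

lemma length_le_sum_list_lengths: "\<forall>xs\<in>set xss. xs \<noteq> [] \<Longrightarrow> length xss \<le> sum_list (map length xss)"
proof (induction xss)
  case (Cons xs xss)
  then have "1 \<le> length xs" by (simp add: Suc_leI)
  then show ?case using Cons by simp
qed simp

lemma card_tab_colset_0_le: "V \<in> revSSYT \<Longrightarrow> card (tab_colset V 0) \<le> sum_list (map length V)"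
proof -
  assume V: "V \<in> revSSYT"
  have "card (tab_colset V 0) \<le> card ((\<lambda>r. V!r!0) ` {..<length V})"
    unfolding tab_colset_def by (intro card_mono) auto
  also have "\<dots> \<le> length V" using card_image_le[of "{..<length V}" "\<lambda>r. V!r!0"] by simp
  also have "\<dots> \<le> sum_list (map length V)"
    using V unfolding revSSYT_def by (simp add: length_le_sum_list_lengths)
  finally show ?thesis .
qed

section \<open>The map phi\<close>

context
  fixes T assumes T: "T \<in> qKT1"
begin

lemma less_fil_height: "T i \<noteq> [] \<Longrightarrow> i < fil_height T"
proof -
  obtain N where "\<forall>i\<in>{i. T i \<noteq> []}. i < N"
    using qKT1_finite[OF T] finite_nat_set_iff_bounded by blast
  then have "\<exists>N. \<forall>i\<ge>N. T i = []" by (metis leD mem_Collect_eq)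
  then have "\<forall>i\<ge>fil_height T. T i = []" unfolding fil_height_def by (rule LeastI_ex)
  then show "T i \<noteq> [] \<Longrightarrow> i < fil_height T" by (meson not_le)
qed

lemma length_le_fil_width: "length (T i) \<le> fil_width T"
proof (cases "T i = []")
  case False
  then have "i \<in> set [0..<fil_height T]" using less_fil_height by simp
  then show ?thesis unfolding fil_width_def by (rule member_le_foldr_max)
qed simp

lemma fil_colset_beyond_width: "fil_width T \<le> c \<Longrightarrow> fil_colset T c = {}"
  unfolding fil_colset_eq_empty_iff using length_le_fil_width le_trans by blast

lemma fil_colset_0: "fil_colset T 0 = {i. T i \<noteq> []}"
  unfolding fil_colset_def using qKT1_first[OF T] by force

lemma finite_fil_colset: "finite (fil_colset T c)"
proof -
  have "fil_colset T c \<subseteq> (\<lambda>i. T i!c) ` {i. T i \<noteq> []}" unfolding fil_colset_def by auto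
  then show ?thesis using qKT1_finite[OF T] by (meson finite_imageI finite_subset)
qed

lemma set_phi_col: "set (phi_col T c) = fil_colset T c"
proof -
  have "c < length (T i) \<Longrightarrow> i < fil_height T" for i
    by (rule less_fil_height) auto
  then show ?thesis unfolding phi_col_def fil_col_def fil_colset_def by auto
qed

lemma sorted_phi_col: "sorted_wrt (>) (phi_col T c)"
proof -
  have "distinct (fil_col T c)"
    unfolding fil_col_def distinct_map using qKT1_column_distinct[OF T] by (auto intro: inj_onI)
  then have "sorted_wrt (<) (sort (fil_col T c))" unfolding strict_sorted_iff by simp
  then show ?thesis unfolding phi_col_def by (simp add: sorted_wrt_rev)
qed

lemma fil_colset_dominated: "card_ge (fil_colset T (Suc c)) t \<le> card_ge (fil_colset T c) t"
proof -
  define S where "S = {i. Suc c < length (T i)}"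
  have image: "fil_colset T (Suc c) = (\<lambda>i. T i!Suc c) ` S" unfolding fil_colset_def S_def by blast
  have "card_ge (fil_colset T (Suc c)) t \<le> card_ge ((\<lambda>i. T i!c) ` S) t"
    unfolding image
  proof (rule card_ge_image_le)
    show "finite S" unfolding S_def by (rule finite_subset[OF _ qKT1_finite[OF T]]) auto
    show "inj_on (\<lambda>i. T i!Suc c) S"
    proof (rule inj_onI)
      fix a b assume "a \<in> S" "b \<in> S" "T a!Suc c = T b!Suc c"
      then show "a = b" using qKT1_column_distinct[OF T, of a b "Suc c"] unfolding S_def by blast
    qed
    show "inj_on (\<lambda>i. T i!c) S"
    proof (rule inj_onI)
      fix a b assume "a \<in> S" "b \<in> S" "T a!c = T b!c"
      then show "a = b" using qKT1_column_distinct[OF T, of a b c] unfolding S_def by auto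
    qed
  qed (use qKT1_Suc_le[OF T] in \<open>auto simp: S_def\<close>)
  also have "\<dots> \<le> card_ge (fil_colset T c) t"
    by (rule card_ge_mono[OF finite_fil_colset]) (auto simp: S_def fil_colset_def)
  finally show ?thesis .
qed

lemma fil_colset_pos: "x \<in> fil_colset T c \<Longrightarrow> 0 < x"
  unfolding fil_colset_def using qKT1_pos[OF T] nth_mem by blast

lemma phi_revSSYT: "phi T \<in> revSSYT"
  unfolding phi_eq_tab_of_columns
  by (rule tab_of_columns_revSSYT) (simp_all add: sorted_phi_col set_phi_col fil_colset_dominated fil_colset_pos)

lemma tab_colset_phi: "tab_colset (phi T) c = fil_colset T c"
proof -
  have "tab_colset (phi T) c = (if c < fil_width T then fil_colset T c else {})"
    unfolding phi_eq_tab_of_columns set_phi_col[symmetric]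
    by (rule tab_colset_tab_of_columns)
      (use dominated_columns_mono[where pc="phi_col T", OF sorted_phi_col] in
        \<open>simp add: set_phi_col fil_colset_dominated\<close>)
  then show ?thesis using fil_colset_beyond_width by simp
qed

end

lemma psi_revSSYT:
  assumes V: "V \<in> revSSYT"
  shows "\<exists>T. psi V = Some T \<and> T \<in> qKT1 \<and> (\<forall>c. fil_colset T c = tab_colset V c)"
proof -
  have "tab_colsets V \<noteq> [] \<Longrightarrow> card (tab_colsets V ! 0) \<le> sum_list (map length V)"
    using card_tab_colset_0_le[OF V] unfolding tab_colsets_def by simp
  from psi_aux_colsets_dominated[OF colsets_dominated_tab_colsets[OF V] this]
  obtain T where T: "psi V = Some T" "T \<in> qKT1"
    and colsets: "\<forall>c<tab_width V. fil_colset T c = tab_colset V c"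
    and lengths: "\<forall>i. length (T i) \<le> tab_width V"
    unfolding psi_def by (auto simp: tab_colsets_def)
  have "fil_colset T c = tab_colset V c" for c
  proof (cases "c < tab_width V")
    case False
    then have "\<forall>i. length (T i) \<le> c" using lengths le_trans not_less by blast
    then show ?thesis
      using False tab_colset_beyond_width[of V c] fil_colset_eq_empty_iff[of T c] by simp
  qed (use colsets in simp)
  then show ?thesis using T by blast
qed

lemma phi_the_psi:
  assumes "V \<in> revSSYT" shows "phi (the (psi V)) = V"
proof -
  obtain T where T: "psi V = Some T" "T \<in> qKT1" "\<forall>c. fil_colset T c = tab_colset V c"
    using psi_revSSYT[OF assms] by blast
  have "phi T = V"
    by (rule revSSYT_eqI[OF phi_revSSYT[OF T(2)] assms]) (simp add: tab_colset_phi[OF T(2)] T(3))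
  then show ?thesis using T(1) by simp
qed

lemma psi_phi:
  assumes T: "T \<in> qKT1" shows "psi (phi T) = Some T"
proof -
  define V where "V = phi T"
  have V: "V \<in> revSSYT" and colsets: "\<And>c. tab_colset V c = fil_colset T c"
    unfolding V_def by (rule phi_revSSYT[OF T], rule tab_colset_phi[OF T])
  have "length (T i) \<le> tab_width V" for i
    using tab_colset_beyond_width[of V "tab_width V"] colsets fil_colset_eq_empty_iff by simp
  moreover have "card {i. T i \<noteq> []} \<le> sum_list (map length V)"
    using card_tab_colset_0_le[OF V] colsets[of 0] fil_colset_0[OF T] by simp
  ultimately have "psi_aux (sum_list (map length V)) (map (fil_colset T) [0..<tab_width V]) = Some T"
    using psi_aux_fil_colsets[OF T] by blast
  then show ?thesis
    unfolding V_def[symmetric] psi_def tab_colsets_def colsets .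
qed

theorem theorem5p8:
  shows "(\<forall>V \<in> revSSYT. \<exists>T. psi V = Some T \<and> T \<in> qKT1)
    \<and> bij_betw (\<lambda>V. the (psi V)) revSSYT qKT1
    \<and> (\<forall>V \<in> revSSYT. phi (the (psi V)) = V)
    \<and> (\<forall>T \<in> qKT1. phi T \<in> revSSYT \<and> the (psi (phi T)) = T)
    \<and> (\<forall>V \<in> revSSYT. \<forall>c. fil_colset (the (psi V)) c = tab_colset V c)
    \<and> (\<forall>T \<in> qKT1. \<forall>c. tab_colset (phi T) c = fil_colset T c)"
proof -
  have psi: "\<forall>V \<in> revSSYT. \<exists>T. psi V = Some T \<and> T \<in> qKT1 \<and> (\<forall>c. fil_colset T c = tab_colset V c)"
    using psi_revSSYT by blast
  have inverse: "\<forall>V \<in> revSSYT. phi (the (psi V)) = V" "\<forall>T \<in> qKT1. the (psi (phi T)) = T"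
    by (simp_all add: phi_the_psi psi_phi)
  have "bij_betw (\<lambda>V. the (psi V)) revSSYT qKT1"
    by (rule bij_betw_byWitness[where f'=phi]) (use inverse psi phi_revSSYT in auto)
  then show ?thesis
    using psi inverse phi_revSSYT tab_colset_phi by fastforce
qed

end
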